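(* Let $a, b \ge 2$ be even integers, at least one of which is not divisible by four. Then $R_\mathrm{cyc}(M_a^\mathrm{nest}, M_b^\mathrm{nest}) = a + b - 2$.
   Context: All graphs are finite, simple and undirected, and a graph of order $n$ has vertex set $\{0,1,\ldots,n-1\}$; $K_n$ is the complete graph on $\{0,\ldots,n-1\}$. A $2$-edge-coloring of $K_n$ assigns each edge a color in $\{1,2\}$. For a graph $H$ and such a coloring, an embedding of $H$ in color $j$ is an injective map $\varphi\colon V(H)\to V(K_n)$ such that for every edge $uv$ of $H$ the edge $\{\varphi(u),\varphi(v)\}$ has color $j$; it is increasing up to a cyclic permutation if there exists $t\in V(H)$ such that $(\varphi(t),\ldots,\varphi(|H|-1),\varphi(0),\ldots,\varphi(t-1))$ is increasing. The cyclic Ramsey number $R_\mathrm{cyc}(H_1,H_2)$ is the smallest $n$ such that every $2$-edge-coloring of $K_n$ admits an embedding of $H_1$ in color $1$ or of $H_2$ in color $2$ that is increasing up to a cyclic permutation. For even $n\ge2$, the nested matching $M_n^\mathrm{nest}$ is the graph of order $n$ whose edges are $\{v,n-1-v\}$ for $0\le v\le n/2-1$. *)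

theory Defs
  imports Main
begin

text \<open>A graph of order h is given by its order h and an edge set E of 2-element
subsets of {0..<h}. A 2-edge-coloring of K_n is a function c on sets of naturals
that assigns to every edge (2-element subset of {0..<n}) a color in {1,2};
values on other sets are irrelevant.\<close>

definition two_coloring :: "nat \<Rightarrow> (nat set \<Rightarrow> nat) \<Rightarrow> bool" where
  "two_coloring n c \<longleftrightarrow> (\<forall>e. e \<subseteq> {0..<n} \<and> card e = 2 \<longrightarrow> c e \<in> {1, 2})"

definition embedding_in_color ::
  "nat \<Rightarrow> (nat set \<Rightarrow> nat) \<Rightarrow> nat \<Rightarrow> nat set set \<Rightarrow> nat \<Rightarrow> (nat \<Rightarrow> nat) \<Rightarrow> bool" where
  "embedding_in_color n c h E j \<phi> \<longleftrightarrow>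
     inj_on \<phi> {0..<h} \<and> \<phi> ` {0..<h} \<subseteq> {0..<n} \<and> (\<forall>e\<in>E. c (\<phi> ` e) = j)"

definition cyc_increasing :: "nat \<Rightarrow> (nat \<Rightarrow> nat) \<Rightarrow> bool" where
  "cyc_increasing h \<phi> \<longleftrightarrow> (\<exists>t<h. sorted_wrt (<) (map \<phi> ([t..<h] @ [0..<t])))"

definition cyc_arrows :: "nat \<Rightarrow> nat \<Rightarrow> nat set set \<Rightarrow> nat \<Rightarrow> nat set set \<Rightarrow> bool" where
  "cyc_arrows n h1 E1 h2 E2 \<longleftrightarrow>
     (\<forall>c. two_coloring n c \<longrightarrow>
        (\<exists>\<phi>. embedding_in_color n c h1 E1 1 \<phi> \<and> cyc_increasing h1 \<phi>) \<or>
        (\<exists>\<phi>. embedding_in_color n c h2 E2 2 \<phi> \<and> cyc_increasing h2 \<phi>))"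

definition R_cyc :: "nat \<Rightarrow> nat set set \<Rightarrow> nat \<Rightarrow> nat set set \<Rightarrow> nat" where
  "R_cyc h1 E1 h2 E2 = (LEAST n. cyc_arrows n h1 E1 h2 E2)"

definition nest_matching :: "nat \<Rightarrow> nat set set" where
  "nest_matching n = {{v, n - 1 - v} | v. v < n div 2}"

end

(* If the a/2 + b/2 - 1 chords {i, n-1-i} of K_n, n = a+b-2, are 2-coloured, a/2 of them
   have colour 1 or b/2 have colour 2, and any m of these chords form an increasingly
   embedded nested matching of order 2m.

   For the lower bound let b/2 = 2q+1 be odd (the other case is symmetric), place the
   N = a+b-3 vertices on a cycle and colour an edge 2 iff its cyclic distance is at most 2q.
   Along a cyclically increasing embedding of a nested matching the clockwise arcs spanned
   by successive chords drop by at least 2. So a/2 chords of cyclic distance at least 2q+1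
   need N >= a + 4q, one vertex more than there is; and among 2q+1 chords of cyclic distance
   at most 2q, the arcs of length at most 2q and those of length at least N - 2q can each
   take only q of them. *)

theory Submission
  imports Defs
begin

lemma div_two_less_if_gap_two: "(x::nat) + 2 \<le> y \<Longrightarrow> x div 2 < y div 2"
  using div_le_mono[of "x + 2" y 2] by simp

lemma card_le_if_gap_two:
  fixes f :: "nat \<Rightarrow> nat"
  assumes gap: "\<And>v w. v \<in> A \<Longrightarrow> w \<in> A \<Longrightarrow> v < w \<Longrightarrow> f w + 2 \<le> f v"
    and range: "f ` A \<subseteq> {lo..<hi}"
  shows "card A \<le> (hi - lo + 1) div 2"
proof -
  let ?g = "\<lambda>v. (f v - lo) div 2"
  have g_less: "?g w < ?g v" if "v \<in> A" "w \<in> A" "v < w" for v w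
  proof (rule div_two_less_if_gap_two)
    show "f w - lo + 2 \<le> f v - lo"
      using gap[OF that] range that by (auto simp: image_subset_iff)
  qed
  have "inj_on ?g A"
  proof (rule inj_onI)
    fix v w assume "v \<in> A" "w \<in> A" "?g v = ?g w"
    then show "v = w"
      using g_less[of v w] g_less[of w v] by (cases v w rule: linorder_cases) auto
  qed
  moreover have "?g ` A \<subseteq> {..<(hi - lo + 1) div 2}"
  proof
    fix y assume "y \<in> ?g ` A"
    then obtain v where "v \<in> A" "y = ?g v" by blast
    moreover have "f v - lo + 2 \<le> hi - lo + 1"
      using range \<open>v \<in> A\<close> by (auto simp: image_subset_iff)
    ultimately show "y \<in> {..<(hi - lo + 1) div 2}"
      using div_two_less_if_gap_two[of "f v - lo" "hi - lo + 1"] by simp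
  qed
  ultimately show ?thesis
    using card_inj_on_le[of ?g A "{..<(hi - lo + 1) div 2}"] by simp
qed

definition arc :: "nat \<Rightarrow> nat \<Rightarrow> nat \<Rightarrow> nat" where
  "arc n x y = (y + n - x) mod n"

definition cyclic_dist :: "nat \<Rightarrow> nat \<Rightarrow> nat \<Rightarrow> nat" where
  "cyclic_dist n x y = min (arc n x y) (arc n y x)"

definition cyc_ordered :: "nat \<Rightarrow> nat \<Rightarrow> nat \<Rightarrow> bool" where
  "cyc_ordered x y z \<longleftrightarrow> (x < y \<and> y < z) \<or> (y < z \<and> z < x) \<or> (z < x \<and> x < y)"

lemma arc_eq: "x < n \<Longrightarrow> y < n \<Longrightarrow> arc n x y = (if x \<le> y then y - x else y + n - x)"
  unfolding arc_def by (auto simp: mod_if)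

lemma arc_bounds: "x < n \<Longrightarrow> y < n \<Longrightarrow> x \<noteq> y \<Longrightarrow> 0 < arc n x y \<and> arc n x y < n"
  by (auto simp: arc_eq)

lemma arc_add:
  "x < n \<Longrightarrow> y < n \<Longrightarrow> z < n \<Longrightarrow> cyc_ordered x y z \<Longrightarrow> arc n x z = arc n x y + arc n y z"
  by (auto simp: arc_eq cyc_ordered_def)

lemma cyclic_dist_eq:
  "x < n \<Longrightarrow> y < n \<Longrightarrow> x \<noteq> y \<Longrightarrow> cyclic_dist n x y = min (arc n x y) (n - arc n x y)"
  by (auto simp: cyclic_dist_def arc_eq)

lemma cyclic_dist_commute: "cyclic_dist n x y = cyclic_dist n y x"
  by (simp add: cyclic_dist_def)

lemma cyc_increasing_imp_cyc_ordered:
  assumes "cyc_increasing h \<phi>" "i < j" "j < k" "k < h"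
  shows "cyc_ordered (\<phi> i) (\<phi> j) (\<phi> k)"
proof -
  obtain t where "t < h" and sorted: "sorted_wrt (<) (map \<phi> ([t..<h] @ [0..<t]))"
    using assms(1) unfolding cyc_increasing_def by auto
  have sorted_upper: "sorted_wrt (\<lambda>x y. \<phi> x < \<phi> y) [t..<h]"
    and sorted_lower: "sorted_wrt (\<lambda>x y. \<phi> x < \<phi> y) [0..<t]"
    and wrap: "\<And>x y. x < t \<Longrightarrow> t \<le> y \<Longrightarrow> y < h \<Longrightarrow> \<phi> y < \<phi> x"
    using sorted by (auto simp: sorted_wrt_append sorted_wrt_map)
  have upper: "\<phi> x < \<phi> y" if "t \<le> x" "x < y" "y < h" for x y
    using sorted_wrt_nth_less[OF sorted_upper, of "x - t" "y - t"] that by simp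
  have lower: "\<phi> x < \<phi> y" if "x < y" "y < t" for x y
    using sorted_wrt_nth_less[OF sorted_lower, of x y] that by simp
  show ?thesis
    using upper[of i j] upper[of j k] lower[of i j] lower[of j k] wrap[of i j] wrap[of i k] wrap[of j k] assms(2-4)
    unfolding cyc_ordered_def by linarith
qed

lemma strict_mono_on_imp_cyc_increasing:
  "strict_mono_on {0..<h} \<phi> \<Longrightarrow> 0 < h \<Longrightarrow> cyc_increasing h \<phi>"
  unfolding cyc_increasing_def
  by (rule exI[of _ 0]) (auto simp: sorted_wrt_iff_nth_less strict_mono_on_def)

lemma arc_cyc_increasing_add:
  assumes "cyc_increasing h \<phi>" "\<phi> ` {0..<h} \<subseteq> {0..<n}" "i < j" "j < k" "k < h"
  shows "arc n (\<phi> i) (\<phi> k) = arc n (\<phi> i) (\<phi> j) + arc n (\<phi> j) (\<phi> k)"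
proof (rule arc_add)
  show "cyc_ordered (\<phi> i) (\<phi> j) (\<phi> k)"
    using assms by (intro cyc_increasing_imp_cyc_ordered[of h])
qed (use assms in \<open>auto simp: image_subset_iff\<close>)

lemma mem_nest_matching_double: "e \<in> nest_matching (2*m) \<longleftrightarrow> (\<exists>v<m. e = {v, 2*m-1-v})"
  by (auto simp: nest_matching_def)

lemma nested_chord_ends:
  fixes m :: nat
  assumes "inj_on \<phi> {0..<2*m}" "\<phi> ` {0..<2*m} \<subseteq> {0..<n}" "v < m"
  shows "\<phi> v < n" "\<phi> (2*m-1-v) < n" "\<phi> v \<noteq> \<phi> (2*m-1-v)"
  using assms inj_on_contraD[OF assms(1), of v "2*m-1-v"] by (auto simp: image_subset_iff)

lemma nested_chord_arc_gap:
  assumes cyc: "cyc_increasing (2*m) \<phi>" and inj: "inj_on \<phi> {0..<2*m}"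
    and img: "\<phi> ` {0..<2*m} \<subseteq> {0..<n}" and "v < w" "w < m"
  shows "arc n (\<phi> w) (\<phi> (2*m-1-w)) + 2 \<le> arc n (\<phi> v) (\<phi> (2*m-1-v))"
proof -
  \<comment> \<open>v < w < 2m-1-w < 2m-1-v, so the arc of chord v is that of chord w plus two nonempty arcs\<close>
  have pos: "0 < arc n (\<phi> x) (\<phi> y)" if "x < 2*m" "y < 2*m" "x \<noteq> y" for x y
    using arc_bounds[of "\<phi> x" n "\<phi> y"] img inj_on_contraD[OF inj] that by (auto simp: image_subset_iff)
  have "arc n (\<phi> v) (\<phi> (2*m-1-v))
      = arc n (\<phi> v) (\<phi> w) + arc n (\<phi> w) (\<phi> (2*m-1-v))"
    using assms by (intro arc_cyc_increasing_add[OF cyc img]) auto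
  also have "arc n (\<phi> w) (\<phi> (2*m-1-v))
      = arc n (\<phi> w) (\<phi> (2*m-1-w)) + arc n (\<phi> (2*m-1-w)) (\<phi> (2*m-1-v))"
    using assms by (intro arc_cyc_increasing_add[OF cyc img]) auto
  finally have "arc n (\<phi> v) (\<phi> (2*m-1-v)) = arc n (\<phi> v) (\<phi> w)
      + arc n (\<phi> w) (\<phi> (2*m-1-w)) + arc n (\<phi> (2*m-1-w)) (\<phi> (2*m-1-v))" by simp
  moreover have "0 < arc n (\<phi> v) (\<phi> w)" "0 < arc n (\<phi> (2*m-1-w)) (\<phi> (2*m-1-v))"
    using assms by (auto intro!: pos)
  ultimately show ?thesis by linarith
qed

lemma nested_matching_long_chords:
  assumes cyc: "cyc_increasing (2*m) \<phi>" and inj: "inj_on \<phi> {0..<2*m}"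
    and img: "\<phi> ` {0..<2*m} \<subseteq> {0..<n}" and "0 < m"
    and long: "\<And>v. v < m \<Longrightarrow> L \<le> cyclic_dist n (\<phi> v) (\<phi> (2*m-1-v))"
  shows "2*m + 2*L \<le> n + 2"
proof -
  let ?f = "\<lambda>v. arc n (\<phi> v) (\<phi> (2*m-1-v))"
  have "card {..<m} \<le> (n + 1 - L - L + 1) div 2"
  proof (rule card_le_if_gap_two)
    show "?f w + 2 \<le> ?f v" if "v \<in> {..<m}" "w \<in> {..<m}" "v < w" for v w
      using nested_chord_arc_gap[OF cyc inj img] that by simp
    show "?f ` {..<m} \<subseteq> {L..<n + 1 - L}"
    proof (rule image_subsetI)
      fix v assume "v \<in> {..<m}"
      then have "v < m" by simp
      have "L \<le> min (?f v) (n - ?f v)" "?f v < n"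
        using long[OF \<open>v < m\<close>] cyclic_dist_eq[OF nested_chord_ends[OF inj img \<open>v < m\<close>]]
          arc_bounds[OF nested_chord_ends[OF inj img \<open>v < m\<close>]] by auto
      then show "?f v \<in> {L..<n + 1 - L}" by auto
    qed
  qed
  then show ?thesis using \<open>0 < m\<close> by simp
qed

lemma nested_matching_short_chords:
  assumes cyc: "cyc_increasing (2*m) \<phi>" and inj: "inj_on \<phi> {0..<2*m}"
    and img: "\<phi> ` {0..<2*m} \<subseteq> {0..<n}"
    and short: "\<And>v. v < m \<Longrightarrow> cyclic_dist n (\<phi> v) (\<phi> (2*m-1-v)) \<le> 2*q"
  shows "m \<le> 2*q"
proof -
  let ?f = "\<lambda>v. arc n (\<phi> v) (\<phi> (2*m-1-v))"
  define A where "A = {v. v < m \<and> ?f v \<le> 2*q}"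
  define B where "B = {v. v < m \<and> \<not> ?f v \<le> 2*q}"
  have bounds: "0 < ?f v \<and> ?f v < n \<and> (?f v \<le> 2*q \<or> n \<le> ?f v + 2*q)" if "v < m" for v
    using short[OF that] cyclic_dist_eq[OF nested_chord_ends[OF inj img that]]
      arc_bounds[OF nested_chord_ends[OF inj img that]] by auto
  have gap: "?f w + 2 \<le> ?f v" if "v < w" "w < m" for v w
    using nested_chord_arc_gap[OF cyc inj img that] .
  have "card A \<le> (2*q + 1 - 1 + 1) div 2"
  proof (rule card_le_if_gap_two)
    show "?f ` A \<subseteq> {1..<2*q + 1}" using bounds by (force simp: A_def)
  qed (use gap in \<open>auto simp: A_def\<close>)
  moreover have "card B \<le> (n - (n - 2*q) + 1) div 2"
  proof (rule card_le_if_gap_two)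
    show "?f ` B \<subseteq> {n - 2*q..<n}" using bounds by (force simp: B_def)
  qed (use gap in \<open>auto simp: B_def\<close>)
  moreover have "(n - (n - 2*q) + 1) div 2 \<le> q"
    using div_le_mono[of "n - (n - 2*q) + 1" "2*q + 1" 2] by simp
  moreover have "card A + card B = m"
  proof -
    have "A \<union> B = {..<m}" "A \<inter> B = {}" by (auto simp: A_def B_def)
    then show ?thesis using card_Un_disjoint[of A B] by (simp add: A_def B_def)
  qed
  ultimately show ?thesis by simp
qed

definition dist_coloring :: "nat \<Rightarrow> nat \<Rightarrow> nat \<Rightarrow> nat \<Rightarrow> nat set \<Rightarrow> nat" where
  "dist_coloring n T short long e = (if cyclic_dist n (Min e) (Max e) \<le> T then short else long)"

lemma dist_coloring_pair:
  "dist_coloring n T short long {x, y} = (if cyclic_dist n x y \<le> T then short else long)"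
  by (cases "x \<le> y") (auto simp: dist_coloring_def max_def min_def cyclic_dist_commute)

lemma two_coloring_dist_coloring:
  "short \<in> {1, 2} \<Longrightarrow> long \<in> {1, 2} \<Longrightarrow> two_coloring n (dist_coloring n T short long)"
  by (simp add: two_coloring_def dist_coloring_def)

lemma embedding_nested_chord_color:
  assumes "embedding_in_color n c (2*m) (nest_matching (2*m)) j \<phi>" "v < m"
  shows "c {\<phi> v, \<phi> (2*m-1-v)} = j"
proof -
  have "{v, 2*m-1-v} \<in> nest_matching (2*m)"
    using assms(2) by (auto simp: mem_nest_matching_double)
  then show ?thesis using assms(1) unfolding embedding_in_color_def by auto
qed

lemma dist_coloring_long_nested_matching:
  assumes emb: "embedding_in_color N (dist_coloring N (2*q) short long) (2*m) (nest_matching (2*m)) long \<phi>"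
    and cyc: "cyc_increasing (2*m) \<phi>" and "short \<noteq> long" and "0 < m"
  shows "2*m + 4*q \<le> N"
proof -
  have "2*m + 2*(2*q + 1) \<le> N + 2"
  proof (rule nested_matching_long_chords[OF cyc _ _ \<open>0 < m\<close>])
    show "inj_on \<phi> {0..<2*m}" "\<phi> ` {0..<2*m} \<subseteq> {0..<N}"
      using emb unfolding embedding_in_color_def by auto
    show "2*q + 1 \<le> cyclic_dist N (\<phi> v) (\<phi> (2*m-1-v))" if "v < m" for v
      using embedding_nested_chord_color[OF emb that] \<open>short \<noteq> long\<close>
      by (auto simp: dist_coloring_pair split: if_splits)
  qed
  then show ?thesis by simp
qed

lemma dist_coloring_short_nested_matching:
  assumes emb: "embedding_in_color N (dist_coloring N (2*q) short long) (2*m) (nest_matching (2*m)) short \<phi>"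
    and cyc: "cyc_increasing (2*m) \<phi>" and "short \<noteq> long"
  shows "m \<le> 2*q"
proof (rule nested_matching_short_chords[OF cyc])
  show "inj_on \<phi> {0..<2*m}" "\<phi> ` {0..<2*m} \<subseteq> {0..<N}"
    using emb unfolding embedding_in_color_def by auto
  show "cyclic_dist N (\<phi> v) (\<phi> (2*m-1-v)) \<le> 2*q" if "v < m" for v
    using embedding_nested_chord_color[OF emb that] \<open>short \<noteq> long\<close>
    by (auto simp: dist_coloring_pair split: if_splits)
qed

lemma nested_matching_embedding_into_chords:
  assumes I: "I \<subseteq> {..<n div 2}" and "m \<le> card I" and "0 < m"
    and color: "\<And>i. i \<in> I \<Longrightarrow> c {i, n-1-i} = j"
  shows "\<exists>\<phi>. embedding_in_color n c (2*m) (nest_matching (2*m)) j \<phi> \<and> cyc_increasing (2*m) \<phi>"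
proof -
  define xs where "xs = sorted_list_of_set I"
  have "finite I" using I finite_subset by blast
  then have xs_in: "xs ! i \<in> I" if "i < m" for i
    using that \<open>m \<le> card I\<close> unfolding xs_def by (metis length_sorted_list_of_set
      nth_mem order_less_le_trans set_sorted_list_of_set)
  have xs_less: "xs ! i < n div 2" if "i < m" for i
    using xs_in[OF that] I by auto
  have xs_mono: "xs ! i < xs ! j" if "i < j" "j < m" for i j
    using sorted_wrt_nth_less[of "(<)" xs i j] that \<open>m \<le> card I\<close> unfolding xs_def by simp
  define \<phi> where "\<phi> v = (if v < m then xs ! v else n - 1 - xs ! (2*m-1-v))" for v
  have mono: "strict_mono_on {0..<2*m} \<phi>"
  proof (rule strict_mono_onI)
    fix i j assume "i \<in> {0..<2*m}" "j \<in> {0..<2*m}" "i < j"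
    then have "i < j" "j < 2*m" by auto
    consider "j < m" | "i < m" "m \<le> j" | "m \<le> i" by linarith
    then show "\<phi> i < \<phi> j"
    proof cases
      case 1
      then show ?thesis using xs_mono[OF \<open>i < j\<close>] \<open>i < j\<close> unfolding \<phi>_def by simp
    next
      case 2
      have "xs ! i < n div 2" "xs ! (2*m-1-j) < n div 2" "2 * (n div 2) \<le> n"
        using 2 xs_less[of i] xs_less[of "2*m-1-j"] \<open>j < 2*m\<close> by auto
      moreover have "\<phi> i = xs ! i" "\<phi> j = n - 1 - xs ! (2*m-1-j)"
        using 2 unfolding \<phi>_def by auto
      ultimately show ?thesis by linarith
    next
      case 3
      have "xs ! (2*m-1-j) < xs ! (2*m-1-i)" "xs ! (2*m-1-i) < n div 2"
        using xs_mono[of "2*m-1-j" "2*m-1-i"] xs_less[of "2*m-1-i"] 3 \<open>i < j\<close> \<open>j < 2*m\<close> by auto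
      then show ?thesis using 3 \<open>i < j\<close> unfolding \<phi>_def by simp
    qed
  qed
  have "embedding_in_color n c (2*m) (nest_matching (2*m)) j \<phi>"
    unfolding embedding_in_color_def
  proof (intro conjI ballI)
    show "inj_on \<phi> {0..<2*m}" using strict_mono_on_imp_inj_on[OF mono] .
    show "\<phi> ` {0..<2*m} \<subseteq> {0..<n}"
      using xs_less \<open>0 < m\<close> unfolding \<phi>_def by (force simp: image_subset_iff)
    fix e assume "e \<in> nest_matching (2*m)"
    then obtain v where "v < m" "e = {v, 2*m-1-v}" by (auto simp: mem_nest_matching_double)
    then have "\<phi> ` e = {xs ! v, n - 1 - xs ! v}" unfolding \<phi>_def by auto
    then show "c (\<phi> ` e) = j" using color xs_in[OF \<open>v < m\<close>] by simp
  qed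
  moreover have "cyc_increasing (2*m) \<phi>"
    using strict_mono_on_imp_cyc_increasing[OF mono] \<open>0 < m\<close> by simp
  ultimately show ?thesis by blast
qed

lemma cyc_arrows_nest_matching:
  assumes "0 < k" "0 < l"
  shows "cyc_arrows (2*k + 2*l - 2) (2*k) (nest_matching (2*k)) (2*l) (nest_matching (2*l))"
  unfolding cyc_arrows_def
proof (intro allI impI)
  fix c
  define n where "n = 2*k + 2*l - 2"
  assume "two_coloring (2*k + 2*l - 2) c"
  moreover have n_half: "n = 2 * (k + l - 1)" using assms unfolding n_def by simp
  ultimately have color: "c {i, n-1-i} \<in> {1, 2}" if "i < n div 2" for i
  proof -
    have "{i, n-1-i} \<subseteq> {0..<n}" "card {i, n-1-i} = 2"
      using that n_half by auto
    then show ?thesis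
      using \<open>two_coloring (2*k + 2*l - 2) c\<close> unfolding two_coloring_def n_def by blast
  qed
  define I1 where "I1 = {i. i < n div 2 \<and> c {i, n-1-i} = 1}"
  define I2 where "I2 = {i. i < n div 2 \<and> c {i, n-1-i} = 2}"
  have "card I1 + card I2 = card (I1 \<union> I2)"
    by (rule card_Un_disjoint[symmetric]) (auto simp: I1_def I2_def)
  also have "I1 \<union> I2 = {..<n div 2}"
    using color by (fastforce simp: I1_def I2_def)
  finally have "k \<le> card I1 \<or> l \<le> card I2"
    using n_half by simp linarith
  moreover have "I1 \<subseteq> {..<n div 2}" "I2 \<subseteq> {..<n div 2}"
    by (auto simp: I1_def I2_def)
  ultimately have
    "(\<exists>\<phi>. embedding_in_color n c (2*k) (nest_matching (2*k)) 1 \<phi> \<and> cyc_increasing (2*k) \<phi>) \<or>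
     (\<exists>\<phi>. embedding_in_color n c (2*l) (nest_matching (2*l)) 2 \<phi> \<and> cyc_increasing (2*l) \<phi>)"
    using nested_matching_embedding_into_chords[of I1 n k c 1]
      nested_matching_embedding_into_chords[of I2 n l c 2] assms
    unfolding I1_def I2_def by blast
  then show "(\<exists>\<phi>. embedding_in_color (2*k + 2*l - 2) c (2*k) (nest_matching (2*k)) 1 \<phi>
        \<and> cyc_increasing (2*k) \<phi>) \<or>
      (\<exists>\<phi>. embedding_in_color (2*k + 2*l - 2) c (2*l) (nest_matching (2*l)) 2 \<phi>
        \<and> cyc_increasing (2*l) \<phi>)"
    unfolding n_def .
qed

lemma not_cyc_arrows_nest_matching:
  assumes "0 < k" "0 < l" "odd k \<or> odd l"
  shows "\<not> cyc_arrows (2*k + 2*l - 3) (2*k) (nest_matching (2*k)) (2*l) (nest_matching (2*l))"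
proof -
  define N where "N = 2*k + 2*l - 3"
  consider q where "l = 2*q + 1" | q where "k = 2*q + 1"
    using assms(3) by (auto elim: oddE)
  then show ?thesis
  proof cases
    case 1
    let ?c = "dist_coloring N (2*q) 2 1"
    have "\<not> (embedding_in_color N ?c (2*k) (nest_matching (2*k)) 1 \<phi> \<and> cyc_increasing (2*k) \<phi>)" for \<phi>
      using dist_coloring_long_nested_matching[of N q 2 1 k \<phi>] 1 assms(1) unfolding N_def by auto
    moreover have "\<not> (embedding_in_color N ?c (2*l) (nest_matching (2*l)) 2 \<phi> \<and> cyc_increasing (2*l) \<phi>)" for \<phi>
      using dist_coloring_short_nested_matching[of N q 2 1 l \<phi>] 1 by auto
    moreover have "two_coloring N ?c" by (simp add: two_coloring_dist_coloring)
    ultimately show ?thesis unfolding cyc_arrows_def N_def by blast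
  next
    case 2
    let ?c = "dist_coloring N (2*q) 1 2"
    have "\<not> (embedding_in_color N ?c (2*k) (nest_matching (2*k)) 1 \<phi> \<and> cyc_increasing (2*k) \<phi>)" for \<phi>
      using dist_coloring_short_nested_matching[of N q 1 2 k \<phi>] 2 by auto
    moreover have "\<not> (embedding_in_color N ?c (2*l) (nest_matching (2*l)) 2 \<phi> \<and> cyc_increasing (2*l) \<phi>)" for \<phi>
      using dist_coloring_long_nested_matching[of N q 1 2 l \<phi>] 2 assms(2) unfolding N_def by auto
    moreover have "two_coloring N ?c" by (simp add: two_coloring_dist_coloring)
    ultimately show ?thesis unfolding cyc_arrows_def N_def by blast
  qed
qed

lemma cyc_arrows_mono:
  assumes "cyc_arrows n h1 E1 h2 E2" "n \<le> N"
  shows "cyc_arrows N h1 E1 h2 E2"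
  unfolding cyc_arrows_def
proof (intro allI impI)
  fix c assume "two_coloring N c"
  moreover have "{0..<n} \<subseteq> {0..<N}" using \<open>n \<le> N\<close> by auto
  ultimately have "two_coloring n c"
    unfolding two_coloring_def by (meson subset_trans)
  moreover have "embedding_in_color N c h E j \<phi>" if "embedding_in_color n c h E j \<phi>" for h E j \<phi>
    using that \<open>n \<le> N\<close> unfolding embedding_in_color_def by auto
  ultimately show "(\<exists>\<phi>. embedding_in_color N c h1 E1 1 \<phi> \<and> cyc_increasing h1 \<phi>) \<or>
      (\<exists>\<phi>. embedding_in_color N c h2 E2 2 \<phi> \<and> cyc_increasing h2 \<phi>)"
    using assms(1) unfolding cyc_arrows_def by blast
qed

theorem theorem4p29:
  fixes a b :: nat
  assumes "even a" and "even b" and "a \<ge> 2" and "b \<ge> 2"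
    and "\<not> (4 dvd a) \<or> \<not> (4 dvd b)"
  shows "R_cyc a (nest_matching a) b (nest_matching b) = a + b - 2"
proof -
  obtain k l where ab: "a = 2*k" "b = 2*l" using assms(1,2) by (auto elim!: evenE)
  have "0 < k" "0 < l" "odd k \<or> odd l" using assms(3-5) ab by auto
  note upper = cyc_arrows_nest_matching[OF \<open>0 < k\<close> \<open>0 < l\<close>]
    and lower = not_cyc_arrows_nest_matching[OF \<open>0 < k\<close> \<open>0 < l\<close> \<open>odd k \<or> odd l\<close>]
  show ?thesis
    unfolding R_cyc_def ab
  proof (rule Least_equality)
    show "cyc_arrows (2*k + 2*l - 2) (2*k) (nest_matching (2*k)) (2*l) (nest_matching (2*l))"
      by (fact upper)
    show "2*k + 2*l - 2 \<le> n" if "cyc_arrows n (2*k) (nest_matching (2*k)) (2*l) (nest_matching (2*l))" for n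
      using cyc_arrows_mono[OF that, of "2*k + 2*l - 3"] lower by force
  qed
qed

end
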